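(* Assume the standing assumptions of the context. Let $\beta>0$. For every $\lambda>0$, $p\in[p_0,q)$, $x\in\mathsf{V}$ and $\xi\in\mathit{\Omega}$, $$\int_{\mathit{\Omega}}\exp\left(\lambda|\omega(x)|^p\right)\pi_x(d\omega|\xi)\le\exp\Big(C(\beta,\lambda,p)+\sum_{y\sim x}\frac{2\beta|\xi(y)|^p}{n(x)n(y)}+\sum_{y\sim x}\mathit{\Gamma}_{xy}(\beta,p)\Big),$$ where $\mathit{\Gamma}_{xy}(\beta,p)=\gamma(\beta,p)[n(x)n(y)]^{r/(p-r)}$, $\gamma(\beta,p)=I_W+4(p-r)\left(\frac{J_W}{2p}\right)^{p/(p-r)}\left(\frac{r}{\beta}\right)^{r/(p-r)}$, and $$C(\beta,\lambda,p)=c_V+\log\int_{\mathbb{R}}\exp\left((\lambda+\beta)|u|^p-a_V|u|^q\right)du-\log\int_{\mathbb{R}}\exp\left(-\beta|u|^p-V(u)\right)du.$$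
   Context: $\mathsf{G}=(\mathsf{V},\mathsf{E})$ is a countable, connected, locally finite undirected graph; $y\sim x$ denotes adjacency, $n(x)$ the degree, $\rho$ the path distance, $o$ a fixed root, $w_\alpha(x)=e^{-\alpha\rho(o,x)}$, $\mathit{\Theta}(\alpha,\theta)=\sum_x\sum_{y\sim x}[n(x)n(y)]^\theta w_\alpha(x)$. Standing assumptions: $\theta>0$ fixed with $\mathit{\Theta}(\alpha,\theta)<\infty$ for some $\alpha>0$; $W:\mathbb{R}^2\to\mathbb{R}$ continuous, symmetric, $|W(u,v)|\le[I_W+J_W(|u|^r+|v|^r)]/2$ with $I_W,J_W,r>0$; $V:\mathbb{R}\to\mathbb{R}$ continuous with $V(u)\ge a_V|u|^q-c_V$ for $a_V,c_V>0$, $q>r+r/\theta$; $p_0=r+r/\theta$. $\mathit{\Omega}=\mathbb{R}^{\mathsf{V}}$. For $x\in\mathsf{V}$ and $\xi\in\mathit{\Omega}$, $\pi_x(\cdot|\xi)$ is the probability measure on $\mathit{\Omega}$ given by $\pi_x(A|\xi)=Z_x(\xi)^{-1}\int_{\mathbb{R}}\mathbb{I}_A(\omega(x)\times\xi_{\mathsf{V}\setminus\{x\}})\exp[-H_x(\omega(x)|\xi)]d\omega(x)$, where $H_x(\omega(x)|\xi)=\sum_{y\sim x}W(\omega(x),\xi(y))+V(\omega(x))$ and $Z_x(\xi)$ is the normalizing constant. *)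

theory Defs
  imports "HOL-Probability.Probability"
begin

definition nbrs :: "('v \<Rightarrow> 'v \<Rightarrow> bool) \<Rightarrow> 'v \<Rightarrow> 'v set" where
  "nbrs adj x = {y. adj x y}"

definition deg :: "('v \<Rightarrow> 'v \<Rightarrow> bool) \<Rightarrow> 'v \<Rightarrow> nat" where
  "deg adj x = card (nbrs adj x)"

definition gdist :: "('v \<Rightarrow> 'v \<Rightarrow> bool) \<Rightarrow> 'v \<Rightarrow> 'v \<Rightarrow> nat" where
  "gdist adj x y = (LEAST k. (adj ^^ k) x y)"

definition wgt :: "('v \<Rightarrow> 'v \<Rightarrow> bool) \<Rightarrow> 'v \<Rightarrow> real \<Rightarrow> 'v \<Rightarrow> real" where
  "wgt adj rt \<alpha> x = exp (- \<alpha> * real (gdist adj rt x))"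

text \<open>the summand of Theta(alpha,theta) at vertex x; Theta < infinity is
  summability of this nonnegative family over all vertices\<close>
definition Theta_term :: "('v \<Rightarrow> 'v \<Rightarrow> bool) \<Rightarrow> 'v \<Rightarrow> real \<Rightarrow> real \<Rightarrow> 'v \<Rightarrow> real" where
  "Theta_term adj rt \<alpha> \<theta> x =
     (\<Sum>y\<in>nbrs adj x. (real (deg adj x * deg adj y)) powr \<theta> * wgt adj rt \<alpha> x)"

definition Theta_finite :: "('v \<Rightarrow> 'v \<Rightarrow> bool) \<Rightarrow> 'v \<Rightarrow> real \<Rightarrow> real \<Rightarrow> bool" where
  "Theta_finite adj rt \<alpha> \<theta> \<longleftrightarrow> (Theta_term adj rt \<alpha> \<theta>) summable_on UNIV"

definition Hx :: "('v \<Rightarrow> 'v \<Rightarrow> bool) \<Rightarrow> (real \<Rightarrow> real \<Rightarrow> real) \<Rightarrow> (real \<Rightarrow> real)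
    \<Rightarrow> 'v \<Rightarrow> ('v \<Rightarrow> real) \<Rightarrow> real \<Rightarrow> real" where
  "Hx adj W V x \<xi> u = (\<Sum>y\<in>nbrs adj x. W u (\<xi> y)) + V u"

definition Zx :: "('v \<Rightarrow> 'v \<Rightarrow> bool) \<Rightarrow> (real \<Rightarrow> real \<Rightarrow> real) \<Rightarrow> (real \<Rightarrow> real)
    \<Rightarrow> 'v \<Rightarrow> ('v \<Rightarrow> real) \<Rightarrow> real" where
  "Zx adj W V x \<xi> = (\<integral>u. exp (- Hx adj W V x \<xi> u) \<partial>lborel)"

definition Omega :: "('v \<Rightarrow> real) measure" where
  "Omega = PiM UNIV (\<lambda>_. borel)"

definition pix :: "('v \<Rightarrow> 'v \<Rightarrow> bool) \<Rightarrow> (real \<Rightarrow> real \<Rightarrow> real) \<Rightarrow> (real \<Rightarrow> real)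
    \<Rightarrow> 'v \<Rightarrow> ('v \<Rightarrow> real) \<Rightarrow> ('v \<Rightarrow> real) measure" where
  "pix adj W V x \<xi> =
     distr (density lborel (\<lambda>u. ennreal (exp (- Hx adj W V x \<xi> u) / Zx adj W V x \<xi>)))
           Omega (\<lambda>u. \<xi>(x := u))"

definition gam :: "real \<Rightarrow> real \<Rightarrow> real \<Rightarrow> real \<Rightarrow> real \<Rightarrow> real" where
  "gam IW JW r \<beta> p = IW + 4 * (p - r) * (JW / (2 * p)) powr (p / (p - r)) * (r / \<beta>) powr (r / (p - r))"

definition Gam :: "('v \<Rightarrow> 'v \<Rightarrow> bool) \<Rightarrow> real \<Rightarrow> real \<Rightarrow> real \<Rightarrow> real \<Rightarrow> real \<Rightarrow> 'v \<Rightarrow> 'v \<Rightarrow> real" where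
  "Gam adj IW JW r \<beta> p x y = gam IW JW r \<beta> p * (real (deg adj x * deg adj y)) powr (r / (p - r))"

definition Cconst :: "(real \<Rightarrow> real) \<Rightarrow> real \<Rightarrow> real \<Rightarrow> real \<Rightarrow> real \<Rightarrow> real \<Rightarrow> real \<Rightarrow> real" where
  "Cconst V aV cV q \<beta> lam p =
     cV + ln (\<integral>u. exp ((lam + \<beta>) * \<bar>u\<bar> powr p - aV * \<bar>u\<bar> powr q) \<partial>lborel)
        - ln (\<integral>u. exp (- \<beta> * \<bar>u\<bar> powr p - V u) \<partial>lborel)"

end

theory Submission
  imports Defs "HOL-Probability.Sinc_Integral"
begin

text \<open>Young's inequality with exponents \<open>p/r\<close> and \<open>p/(p-r)\<close> splits each edge term:
  \<open>|W(u, \<xi>(y))| \<le> \<beta>|u|^p/(n(x)n(y)) + \<beta>|\<xi>(y)|^p/(n(x)n(y)) + \<Gamma>_xy/2\<close>. As \<open>n(y) \<ge> 1\<close>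
  and \<open>x\<close> has \<open>n(x)\<close> neighbours, the weights \<open>1/(n(x)n(y))\<close> add up to at most 1, so the
  interaction part of \<open>H_x(u|\<xi>)\<close> is bounded by \<open>\<beta>|u|^p + S\<close> in absolute value. The
  resulting upper bound on \<open>e^{-H_x}\<close>, combined with \<open>V(u) \<ge> a_V|u|^q - c_V\<close>, controls the
  numerator of the exponential moment, and the lower bound \<open>e^{-H_x} \<ge> e^{-S-\<beta>|u|^p-V(u)}\<close>
  controls \<open>Z_x(\<xi>)\<close> from below; the two factors \<open>e^S\<close> give \<open>e^{2S}\<close>.\<close>

lemma Young_powr:
  fixes b e r p t :: real
  assumes r: "0 < r" and rp: "r < p" and b: "0 \<le> b" and e: "0 < e" and t: "0 \<le> t"
  shows "b * t powr r
    \<le> e * t powr p + (p - r) * (b / p) powr (p / (p - r)) * (r / e) powr (r / (p - r))"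
proof -
  define c where "c = e * p / r"
  have p: "0 < p" using r rp by linarith
  have c: "0 < c" using e p r by (simp add: c_def)
  have "(c powr (r / p) * t powr r) * (b * c powr (- r / p))
      \<le> (c powr (r / p) * t powr r) powr (p / r) / (p / r)
        + (b * c powr (- r / p)) powr (p / (p - r)) / (p / (p - r))"
    using r rp b by (intro Youngs_inequality) (auto simp: field_simps)
  also have "(c powr (r / p) * t powr r) powr (p / r) / (p / r) = e * t powr p"
    using r p c t by (simp add: powr_mult powr_powr c_def field_simps)
  also have "(b * c powr (- r / p)) powr (p / (p - r)) / (p / (p - r))
      = (p - r) * (b / p) powr (p / (p - r)) * (r / e) powr (r / (p - r))"
  proof -
    have "(b * c powr (- r / p)) powr (p / (p - r)) = b powr (p / (p - r)) * c powr (- r / (p - r))"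
      using r rp b c by (simp add: powr_mult powr_powr field_simps)
    also have "c powr (- r / (p - r)) = (r / e) powr (r / (p - r)) * p powr (- r / (p - r))"
      using r e p by (simp add: c_def powr_minus_divide powr_divide powr_mult field_simps)
    also have "p powr (- r / (p - r)) = p * p powr (- p / (p - r))"
    proof -
      have "- r / (p - r) = 1 + - p / (p - r)" using rp by (simp add: field_simps)
      thus ?thesis using p by (simp only: powr_add powr_one_gt_zero_iff) simp
    qed
    moreover have "(b / p) powr (p / (p - r)) = b powr (p / (p - r)) * p powr (- p / (p - r))"
      using b p by (simp add: powr_divide powr_minus_divide)
    ultimately show ?thesis
      using rp p by (simp add: field_simps)
  qed
  finally show ?thesis
    using c by (simp add: powr_minus field_simps)
qed

lemma one_plus_square_le_exp_powr:
  fixes c q :: real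
  assumes c: "0 < c" and q: "0 < q"
  obtains M where "\<And>t. 0 \<le> t \<Longrightarrow> 1 + t\<^sup>2 \<le> M * exp (c * t powr q)"
proof -
  define n :: nat where "n = nat \<lceil>2 / q\<rceil> + 1"
  have n: "0 < n" by (simp add: n_def)
  have qn: "2 < q * n"
  proof -
    have "2 / q < n" unfolding n_def by linarith
    thus ?thesis using q by (simp add: field_simps)
  qed
  define K where "K = (q * n - 2) * (1 / (q * n)) powr (q * n / (q * n - 2)) * 2 powr (2 / (q * n - 2))"
  have "1 + t\<^sup>2 \<le> (1 + K + (n / c) ^ n) * exp (c * t powr q)" if t: "0 \<le> t" for t
  proof -
    have "t\<^sup>2 \<le> t powr (q * n) + K"
      using Young_powr[of 2 "q * n" 1 1 t] qn t by (simp add: K_def powr_numeral)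
    also have "t powr (q * n) = (t powr q) ^ n"
      using n by (metis powr_ge_zero powr_powr powr_realpow' neq0_conv)
    also have "\<dots> = (n / c) ^ n * (c * t powr q / n) ^ n"
      using c n by (simp add: power_divide power_mult_distrib)
    also have "(c * t powr q / n) ^ n \<le> (1 + c * t powr q / n) ^ n"
      using c t by (intro power_mono) auto
    also have "\<dots> \<le> exp (c * t powr q)"
      using c n by (intro exp_ge_one_plus_x_over_n_power_n) (auto intro: order_trans[of _ 0])
    finally have t2: "t\<^sup>2 \<le> (n / c) ^ n * exp (c * t powr q) + K"
      using c by (simp add: mult_left_mono)
    have e: "1 \<le> exp (c * t powr q)" using c t by simp
    moreover have "0 \<le> K" using qn by (simp add: K_def)
    ultimately have "K \<le> K * exp (c * t powr q)" by (simp add: mult_le_cancel_left1)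
    with t2 e show ?thesis
      unfolding distrib_right by linarith
  qed
  thus thesis using that by blast
qed

text \<open>The Cauchy density \<open>1/(1+u^2)\<close> serves as integrable majorant for \<open>e^{-c|u|^q}\<close>.\<close>

lemma integrable_exp_neg_powr:
  fixes c q :: real
  assumes c: "0 < c" and q: "0 < q"
  shows "integrable lborel (\<lambda>u::real. exp (- c * \<bar>u\<bar> powr q))"
proof -
  obtain M where M: "\<And>t. 0 \<le> t \<Longrightarrow> 1 + t\<^sup>2 \<le> M * exp (c * t powr q)"
    using one_plus_square_le_exp_powr c q by blast
  show ?thesis
  proof (rule Bochner_Integration.integrable_bound)
    show "integrable lborel (\<lambda>u::real. M * inverse (1 + u\<^sup>2))"
      using integrable_inverse_1_plus_square by (simp add: set_integrable_def)
    show "AE u in lborel. norm (exp (- c * \<bar>u\<bar> powr q)) \<le> norm (M * inverse (1 + u\<^sup>2))"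
    proof (intro AE_I2)
      fix u :: real
      have "1 + u\<^sup>2 \<le> M * exp (c * \<bar>u\<bar> powr q)" using M[of "\<bar>u\<bar>"] by simp
      hence "exp (- c * \<bar>u\<bar> powr q) \<le> M * inverse (1 + u\<^sup>2)"
        by (simp add: exp_minus field_simps add_pos_nonneg)
      thus "norm (exp (- c * \<bar>u\<bar> powr q)) \<le> norm (M * inverse (1 + u\<^sup>2))" by simp
    qed
  qed simp
qed

lemma integrable_exp_powr_minus_powr:
  fixes a b p q :: real
  assumes a: "0 < a" and b: "0 \<le> b" and p: "0 < p" and pq: "p < q"
  shows "integrable lborel (\<lambda>u::real. exp (b * \<bar>u\<bar> powr p - a * \<bar>u\<bar> powr q))"
proof (rule Bochner_Integration.integrable_bound)
  define K where "K = (q - p) * (b / q) powr (q / (q - p)) * (p / (a / 2)) powr (p / (q - p))"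
  show "integrable lborel (\<lambda>u::real. exp K * exp (- (a / 2) * \<bar>u\<bar> powr q))"
    using a p pq by (intro integrable_mult_right integrable_exp_neg_powr) auto
  show "AE u in lborel. norm (exp (b * \<bar>u\<bar> powr p - a * \<bar>u\<bar> powr q))
      \<le> norm (exp K * exp (- (a / 2) * \<bar>u\<bar> powr q))"
  proof (intro AE_I2)
    fix u :: real
    have "b * \<bar>u\<bar> powr p \<le> a / 2 * \<bar>u\<bar> powr q + K"
      unfolding K_def using a b p pq by (intro Young_powr) auto
    thus "norm (exp (b * \<bar>u\<bar> powr p - a * \<bar>u\<bar> powr q))
        \<le> norm (exp K * exp (- (a / 2) * \<bar>u\<bar> powr q))"
      by (simp add: exp_add[symmetric])
  qed
qed measurable

lemma integral_pos_lborel: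
  fixes f :: "real \<Rightarrow> real"
  assumes f: "integrable lborel f" and pos: "\<And>u. 0 < f u"
  shows "0 < integral\<^sup>L lborel f"
proof -
  have "integral\<^sup>L lborel f \<noteq> 0"
  proof
    assume "integral\<^sup>L lborel f = 0"
    hence "AE u in lborel. f u = 0"
      using integral_nonneg_eq_0_iff_AE[OF f] pos by (simp add: less_imp_le)
    hence "emeasure lborel {u \<in> space lborel. f u \<noteq> 0} = 0" by (rule AE_E2)
    moreover have "f u \<noteq> 0" for u using pos[of u] by simp
    ultimately show False by simp
  qed
  moreover have "0 \<le> integral\<^sup>L lborel f" using pos by (simp add: less_imp_le)
  ultimately show ?thesis by simp
qed

lemma abs_W_le_gam:
  fixes W :: "real \<Rightarrow> real \<Rightarrow> real" and IW JW r p \<beta> N u v :: real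
  assumes W_bound: "\<bar>W u v\<bar> \<le> (IW + JW * (\<bar>u\<bar> powr r + \<bar>v\<bar> powr r)) / 2"
    and IW: "0 \<le> IW" and JW: "0 \<le> JW" and r: "0 < r" and rp: "r < p"
    and beta: "0 < \<beta>" and N: "1 \<le> N"
  shows "\<bar>W u v\<bar> \<le> \<beta> * \<bar>u\<bar> powr p / N + \<beta> * \<bar>v\<bar> powr p / N
            + gam IW JW r \<beta> p * N powr (r / (p - r)) / 2"
proof -
  define E where "E = N powr (r / (p - r))"
  define c where "c = (p - r) * (JW / (2 * p)) powr (p / (p - r)) * (r / \<beta>) powr (r / (p - r))"
  have Young: "JW / 2 * t powr r \<le> \<beta> / N * t powr p + c * E" if "0 \<le> t" for t
  proof -
    have "JW / 2 * t powr r
        \<le> \<beta> / N * t powr p + (p - r) * (JW / 2 / p) powr (p / (p - r)) * (r / (\<beta> / N)) powr (r / (p - r))"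
      using that r rp JW beta N by (intro Young_powr) auto
    also have "(r / (\<beta> / N)) powr (r / (p - r)) = (r / \<beta>) powr (r / (p - r)) * E"
      using N by (simp add: E_def powr_mult[symmetric])
    finally show ?thesis by (simp add: c_def mult.assoc)
  qed
  have "IW \<le> IW * E"
    using IW N r rp by (simp add: E_def mult_le_cancel_left1 ge_one_powr_ge_zero)
  moreover have "gam IW JW r \<beta> p * E / 2 = IW * E / 2 + 2 * (c * E)"
    by (simp add: gam_def c_def field_simps)
  ultimately show ?thesis
    using W_bound Young[of "\<bar>u\<bar>"] Young[of "\<bar>v\<bar>"] by (simp add: E_def[symmetric] field_simps)
qed

lemma deg_pos_if_adj:
  assumes "finite (nbrs adj x)" and "adj x y"
  shows "0 < deg adj x"
  using assms by (auto simp: deg_def nbrs_def card_gt_0_iff)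

lemma sum_nbrs_div_deg_le:
  assumes sym: "\<And>u v. adj u v \<Longrightarrow> adj v u" and locfin: "\<And>u. finite (nbrs adj u)"
    and c: "0 \<le> c"
  shows "(\<Sum>y\<in>nbrs adj x. c / real (deg adj x * deg adj y)) \<le> c"
proof (cases "nbrs adj x = {}")
  case False
  have "(\<Sum>y\<in>nbrs adj x. c / real (deg adj x * deg adj y)) \<le> (\<Sum>y\<in>nbrs adj x. c / real (deg adj x))"
  proof (rule sum_mono)
    fix y assume "y \<in> nbrs adj x"
    hence "adj x y" "adj y x" using sym by (auto simp: nbrs_def)
    hence "0 < deg adj x" "0 < deg adj y" by (auto intro: deg_pos_if_adj locfin)
    thus "c / real (deg adj x * deg adj y) \<le> c / real (deg adj x)"
      using c by (intro divide_left_mono) auto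
  qed
  also have "\<dots> = c"
    using False locfin[of x] by (simp add: deg_def)
  finally show ?thesis .
qed (use c in simp)

text \<open>Twice this is the sum of the two neighbour sums in the bound of the theorem.\<close>

definition boundary_energy :: "('v \<Rightarrow> 'v \<Rightarrow> bool) \<Rightarrow> real \<Rightarrow> real \<Rightarrow> real \<Rightarrow> real \<Rightarrow> real
    \<Rightarrow> 'v \<Rightarrow> ('v \<Rightarrow> real) \<Rightarrow> real" where
  "boundary_energy adj IW JW r \<beta> p x \<xi> =
     (\<Sum>y\<in>nbrs adj x. \<beta> * \<bar>\<xi> y\<bar> powr p / real (deg adj x * deg adj y) + Gam adj IW JW r \<beta> p x y / 2)"

lemma abs_sum_nbrs_W_le:
  fixes W :: "real \<Rightarrow> real \<Rightarrow> real"
  assumes sym: "\<And>u v. adj u v \<Longrightarrow> adj v u" and locfin: "\<And>u. finite (nbrs adj u)"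
    and W_bound: "\<And>u v. \<bar>W u v\<bar> \<le> (IW + JW * (\<bar>u\<bar> powr r + \<bar>v\<bar> powr r)) / 2"
    and "0 \<le> IW" "0 \<le> JW" "0 < r" "r < p" "0 < \<beta>"
  shows "\<bar>\<Sum>y\<in>nbrs adj x. W u (\<xi> y)\<bar> \<le> \<beta> * \<bar>u\<bar> powr p + boundary_energy adj IW JW r \<beta> p x \<xi>"
proof -
  have "\<bar>\<Sum>y\<in>nbrs adj x. W u (\<xi> y)\<bar> \<le> (\<Sum>y\<in>nbrs adj x. \<bar>W u (\<xi> y)\<bar>)"
    by (rule sum_abs)
  also have "\<dots> \<le> (\<Sum>y\<in>nbrs adj x. \<beta> * \<bar>u\<bar> powr p / real (deg adj x * deg adj y)
      + (\<beta> * \<bar>\<xi> y\<bar> powr p / real (deg adj x * deg adj y) + Gam adj IW JW r \<beta> p x y / 2))"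
  proof (rule sum_mono)
    fix y assume "y \<in> nbrs adj x"
    hence "adj x y" "adj y x" using sym by (auto simp: nbrs_def)
    hence "0 < deg adj x" "0 < deg adj y" by (auto intro: deg_pos_if_adj locfin)
    hence "1 \<le> real (deg adj x * deg adj y)"
      by (metis One_nat_def Suc_leI nat_0_less_mult_iff of_nat_1 of_nat_le_iff)
    thus "\<bar>W u (\<xi> y)\<bar> \<le> \<beta> * \<bar>u\<bar> powr p / real (deg adj x * deg adj y)
      + (\<beta> * \<bar>\<xi> y\<bar> powr p / real (deg adj x * deg adj y) + Gam adj IW JW r \<beta> p x y / 2)"
      using abs_W_le_gam[of W u "\<xi> y", OF W_bound] assms by (simp add: Gam_def add.assoc)
  qed
  also have "\<dots> \<le> \<beta> * \<bar>u\<bar> powr p + boundary_energy adj IW JW r \<beta> p x \<xi>"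
    using sum_nbrs_div_deg_le[OF sym locfin, of "\<beta> * \<bar>u\<bar> powr p" x] assms
    by (simp add: boundary_energy_def sum.distrib)
  finally show ?thesis .
qed

lemma integrable_exp_neg_powr_minus:
  fixes V :: "real \<Rightarrow> real" and aV cV q \<beta> p :: real
  assumes [measurable]: "V \<in> borel_measurable borel"
    and V_bound: "\<And>u. aV * \<bar>u\<bar> powr q - cV \<le> V u"
    and aV: "0 < aV" and beta: "0 \<le> \<beta>" and q: "0 < q"
  shows "integrable lborel (\<lambda>u. exp (- \<beta> * \<bar>u\<bar> powr p - V u))"
proof (rule Bochner_Integration.integrable_bound)
  show "integrable lborel (\<lambda>u. exp cV * exp (- aV * \<bar>u\<bar> powr q))"
    using aV q by (intro integrable_mult_right integrable_exp_neg_powr) auto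
  show "AE u in lborel. norm (exp (- \<beta> * \<bar>u\<bar> powr p - V u))
      \<le> norm (exp cV * exp (- aV * \<bar>u\<bar> powr q))"
  proof (intro AE_I2)
    fix u
    have "- \<beta> * \<bar>u\<bar> powr p - V u \<le> cV + - aV * \<bar>u\<bar> powr q"
    proof -
      have "0 \<le> \<beta> * \<bar>u\<bar> powr p" using beta by simp
      thus ?thesis using V_bound[of u] by linarith
    qed
    thus "norm (exp (- \<beta> * \<bar>u\<bar> powr p - V u)) \<le> norm (exp cV * exp (- aV * \<bar>u\<bar> powr q))"
      by (simp add: exp_add[symmetric])
  qed
qed measurable

lemma Gibbs_normalizer_ge:
  fixes I V :: "real \<Rightarrow> real" and aV cV q \<beta> p S :: real
  assumes [measurable]: "I \<in> borel_measurable borel" "V \<in> borel_measurable borel"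
    and I_bound: "\<And>u. \<bar>I u\<bar> \<le> \<beta> * \<bar>u\<bar> powr p + S"
    and V_bound: "\<And>u. aV * \<bar>u\<bar> powr q - cV \<le> V u"
    and aV: "0 < aV" and beta: "0 < \<beta>" and p: "0 < p" and pq: "p < q"
  shows "exp (- S) * (\<integral>u. exp (- \<beta> * \<bar>u\<bar> powr p - V u) \<partial>lborel)
    \<le> (\<integral>u. exp (- (I u + V u)) \<partial>lborel)"
proof -
  have int: "integrable lborel (\<lambda>u. exp (- (I u + V u)))"
  proof (rule Bochner_Integration.integrable_bound)
    show "integrable lborel (\<lambda>u. exp (S + cV) * exp (\<beta> * \<bar>u\<bar> powr p - aV * \<bar>u\<bar> powr q))"
      using aV beta p pq by (intro integrable_mult_right integrable_exp_powr_minus_powr) auto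
    show "AE u in lborel. norm (exp (- (I u + V u)))
        \<le> norm (exp (S + cV) * exp (\<beta> * \<bar>u\<bar> powr p - aV * \<bar>u\<bar> powr q))"
    proof (intro AE_I2)
      fix u
      have "- (I u + V u) \<le> S + cV + (\<beta> * \<bar>u\<bar> powr p - aV * \<bar>u\<bar> powr q)"
        using I_bound[of u] V_bound[of u] by linarith
      thus "norm (exp (- (I u + V u)))
          \<le> norm (exp (S + cV) * exp (\<beta> * \<bar>u\<bar> powr p - aV * \<bar>u\<bar> powr q))"
        by (simp add: exp_add[symmetric])
    qed
  qed measurable
  have intF: "integrable lborel (\<lambda>u. exp (- \<beta> * \<bar>u\<bar> powr p - V u))"
    using aV beta p pq by (intro integrable_exp_neg_powr_minus[OF _ V_bound]) auto
  have "exp (- S) * (\<integral>u. exp (- \<beta> * \<bar>u\<bar> powr p - V u) \<partial>lborel)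
      = (\<integral>u. exp (- S) * exp (- \<beta> * \<bar>u\<bar> powr p - V u) \<partial>lborel)"
    by simp
  also have "\<dots> \<le> (\<integral>u. exp (- (I u + V u)) \<partial>lborel)"
  proof (intro integral_mono integrable_mult_right int)
    fix u
    have "- S + (- \<beta> * \<bar>u\<bar> powr p - V u) \<le> - (I u + V u)" using I_bound[of u] by linarith
    thus "exp (- S) * exp (- \<beta> * \<bar>u\<bar> powr p - V u) \<le> exp (- (I u + V u))"
      by (simp add: exp_add[symmetric])
  qed (rule intF)
  finally show ?thesis .
qed

lemma nn_integral_exp_powr_Gibbs_le:
  fixes I V :: "real \<Rightarrow> real" and aV cV q \<beta> lam p S :: real
  assumes [measurable]: "I \<in> borel_measurable borel" "V \<in> borel_measurable borel"
    and I_bound: "\<And>u. \<bar>I u\<bar> \<le> \<beta> * \<bar>u\<bar> powr p + S"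
    and V_bound: "\<And>u. aV * \<bar>u\<bar> powr q - cV \<le> V u"
    and aV: "0 < aV" and beta: "0 < \<beta>" and lam: "0 \<le> lam" and p: "0 < p" and pq: "p < q"
  shows "(\<integral>\<^sup>+ u. ennreal (exp (- (I u + V u)) / (\<integral>u. exp (- (I u + V u)) \<partial>lborel))
            * ennreal (exp (lam * \<bar>u\<bar> powr p)) \<partial>lborel)
    \<le> ennreal (exp (Cconst V aV cV q \<beta> lam p + 2 * S))"
proof -
  define Z where "Z = (\<integral>u. exp (- (I u + V u)) \<partial>lborel)"
  define G where "G u = exp ((lam + \<beta>) * \<bar>u\<bar> powr p - aV * \<bar>u\<bar> powr q)" for u
  define A where "A = (\<integral>u. G u \<partial>lborel)"
  define B where "B = (\<integral>u. exp (- \<beta> * \<bar>u\<bar> powr p - V u) \<partial>lborel)"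
  have intG: "integrable lborel G"
    unfolding G_def using aV beta lam p pq by (intro integrable_exp_powr_minus_powr) auto
  have A: "0 < A"
    unfolding A_def by (rule integral_pos_lborel[OF intG]) (simp add: G_def)
  have B: "0 < B"
    unfolding B_def using aV beta p pq
    by (intro integral_pos_lborel integrable_exp_neg_powr_minus[OF _ V_bound]) auto
  have ZB: "exp (- S) * B \<le> Z"
    unfolding B_def Z_def by (rule Gibbs_normalizer_ge[OF assms(1-4) aV beta p pq])
  moreover have "0 < exp (- S) * B" using B by simp
  ultimately have Z: "0 < Z" by linarith
  have "(\<integral>\<^sup>+ u. ennreal (exp (- (I u + V u)) / Z) * ennreal (exp (lam * \<bar>u\<bar> powr p)) \<partial>lborel)
      \<le> (\<integral>\<^sup>+ u. ennreal (exp (cV + S) / Z * G u) \<partial>lborel)"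
  proof (rule nn_integral_mono)
    fix u
    have "- (I u + V u) + lam * \<bar>u\<bar> powr p
        \<le> cV + S + ((lam + \<beta>) * \<bar>u\<bar> powr p - aV * \<bar>u\<bar> powr q)"
      using I_bound[of u] V_bound[of u] by (simp add: algebra_simps abs_le_iff)
    hence "exp (- (I u + V u)) / Z * exp (lam * \<bar>u\<bar> powr p) \<le> exp (cV + S) / Z * G u"
      using Z by (simp add: G_def exp_add[symmetric] divide_right_mono)
    thus "ennreal (exp (- (I u + V u)) / Z) * ennreal (exp (lam * \<bar>u\<bar> powr p))
        \<le> ennreal (exp (cV + S) / Z * G u)"
      using Z by (simp add: ennreal_mult'[symmetric] ennreal_leI)
  qed
  also have "\<dots> = ennreal (exp (cV + S) / Z * A)"
  proof -
    have "(\<integral>\<^sup>+ u. ennreal (exp (cV + S) / Z * G u) \<partial>lborel)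
        = ennreal (\<integral>u. exp (cV + S) / Z * G u \<partial>lborel)"
      using Z by (intro nn_integral_eq_integral integrable_mult_right intG) (auto simp: G_def)
    thus ?thesis by (simp add: A_def)
  qed
  also have "exp (cV + S) / Z * A \<le> exp (cV + S) / (exp (- S) * B) * A"
    using ZB A B Z by (intro mult_right_mono divide_left_mono) auto
  also have "\<dots> = exp (Cconst V aV cV q \<beta> lam p + 2 * S)"
  proof -
    have C: "Cconst V aV cV q \<beta> lam p = cV + ln A - ln B"
      by (simp add: Cconst_def A_def B_def G_def)
    have "exp (Cconst V aV cV q \<beta> lam p + 2 * S) = exp cV * exp (ln A) / exp (ln B) * (exp S * exp S)"
      unfolding C by (simp only: mult_2 exp_add exp_diff)
    also have "\<dots> = exp (cV + S) / (exp (- S) * B) * A"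
      using A B by (simp add: exp_add exp_minus divide_simps)
    finally show ?thesis ..
  qed
  finally show ?thesis by (simp add: Z_def ennreal_leI)
qed

lemma continuous_on_Hx:
  assumes W: "continuous_on UNIV (\<lambda>(u, v). W u v)" and V: "continuous_on UNIV V"
  shows "continuous_on UNIV (Hx adj W V x \<xi>)"
proof -
  have "continuous_on UNIV (\<lambda>u. W u c)" for c
    using continuous_on_compose2[OF W continuous_on_Pair[OF continuous_on_id continuous_on_const]]
    by simp
  thus ?thesis
    unfolding Hx_def[abs_def] by (intro continuous_intros V)
qed

lemma nn_integral_pix:
  assumes [measurable]: "Hx adj W V x \<xi> \<in> borel_measurable borel" "g \<in> borel_measurable borel"
  shows "(\<integral>\<^sup>+ \<omega>. g (\<omega> x) \<partial>pix adj W V x \<xi>)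
    = (\<integral>\<^sup>+ u. ennreal (exp (- Hx adj W V x \<xi> u) / Zx adj W V x \<xi>) * g u \<partial>lborel)"
proof -
  have [measurable]: "(\<lambda>u. \<xi>(x := u)) \<in> borel \<rightarrow>\<^sub>M Omega"
    unfolding Omega_def fun_upd_def by (rule measurable_PiM_single') auto
  show ?thesis
    unfolding pix_def
    by (subst nn_integral_distr) (simp_all add: nn_integral_density, simp add: Omega_def)
qed

theorem lemma4p1:
  fixes adj :: "'v::countable \<Rightarrow> 'v \<Rightarrow> bool" and rt :: 'v
    and W :: "real \<Rightarrow> real \<Rightarrow> real" and V :: "real \<Rightarrow> real"
    and \<theta> IW JW r aV cV q p0 \<beta> lam p :: real
    and x :: 'v and \<xi> :: "'v \<Rightarrow> real"
  assumes sym: "\<And>u v. adj u v \<Longrightarrow> adj v u"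
    and irrefl: "\<And>u. \<not> adj u u"
    and connected: "\<And>u v. adj\<^sup>*\<^sup>* u v"
    and locfin: "\<And>u. finite (nbrs adj u)"
    and theta_pos: "\<theta> > 0"
    and Theta: "\<exists>\<alpha>>0. Theta_finite adj rt \<alpha> \<theta>"
    and W_cont: "continuous_on UNIV (\<lambda>(u, v). W u v)"
    and W_sym: "\<And>u v. W u v = W v u"
    and W_bound: "\<And>u v. \<bar>W u v\<bar> \<le> (IW + JW * (\<bar>u\<bar> powr r + \<bar>v\<bar> powr r)) / 2"
    and IW: "IW > 0" and JW: "JW > 0" and r: "r > 0"
    and V_cont: "continuous_on UNIV V"
    and V_bound: "\<And>u. V u \<ge> aV * \<bar>u\<bar> powr q - cV"
    and aV: "aV > 0" and cV: "cV > 0"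
    and q: "q > r + r / \<theta>"
    and p0: "p0 = r + r / \<theta>"
    and beta: "\<beta> > 0"
    and lam: "lam > 0"
    and p: "p0 \<le> p" "p < q"
  shows "(\<integral>\<^sup>+ \<omega>. ennreal (exp (lam * \<bar>\<omega> x\<bar> powr p)) \<partial>(pix adj W V x \<xi>))
     \<le> ennreal (exp (Cconst V aV cV q \<beta> lam p
          + (\<Sum>y\<in>nbrs adj x. 2 * \<beta> * \<bar>\<xi> y\<bar> powr p / real (deg adj x * deg adj y))
          + (\<Sum>y\<in>nbrs adj x. Gam adj IW JW r \<beta> p x y)))"
proof -
  have "0 < r / \<theta>" using r theta_pos by simp
  hence rp: "r < p" using p p0 by linarith
  define I where "I u = (\<Sum>y\<in>nbrs adj x. W u (\<xi> y))" for u
  define S where "S = boundary_energy adj IW JW r \<beta> p x \<xi>"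
  have V_measurable[measurable]: "V \<in> borel_measurable borel"
    and Hx_measurable[measurable]: "Hx adj W V x \<xi> \<in> borel_measurable borel"
    by (intro borel_measurable_continuous_onI V_cont continuous_on_Hx[OF W_cont])+
  have I_measurable: "I \<in> borel_measurable borel"
  proof -
    have I_eq: "I = (\<lambda>u. Hx adj W V x \<xi> u - V u)" by (simp add: I_def Hx_def fun_eq_iff)
    show ?thesis unfolding I_eq by measurable
  qed
  have I_bound: "\<bar>I u\<bar> \<le> \<beta> * \<bar>u\<bar> powr p + S" for u
    unfolding I_def S_def using IW JW r rp beta by (intro abs_sum_nbrs_W_le[OF sym locfin W_bound]) auto
  have "(\<integral>\<^sup>+ \<omega>. ennreal (exp (lam * \<bar>\<omega> x\<bar> powr p)) \<partial>(pix adj W V x \<xi>))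
      = (\<integral>\<^sup>+ u. ennreal (exp (- (I u + V u)) / (\<integral>u. exp (- (I u + V u)) \<partial>lborel))
            * ennreal (exp (lam * \<bar>u\<bar> powr p)) \<partial>lborel)"
    by (subst nn_integral_pix[OF Hx_measurable]) (simp_all add: Zx_def Hx_def I_def)
  also have "\<dots> \<le> ennreal (exp (Cconst V aV cV q \<beta> lam p + 2 * S))"
    using lam r rp p
    by (intro nn_integral_exp_powr_Gibbs_le[OF I_measurable V_measurable I_bound V_bound aV beta]) auto
  also have "2 * S = (\<Sum>y\<in>nbrs adj x. 2 * \<beta> * \<bar>\<xi> y\<bar> powr p / real (deg adj x * deg adj y))
          + (\<Sum>y\<in>nbrs adj x. Gam adj IW JW r \<beta> p x y)"
    by (simp add: S_def boundary_energy_def sum_distrib_left sum.distrib mult.assoc)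
  finally show ?thesis by (simp add: add.assoc)
qed

end
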